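(* Let $\mathbf{C}=\mathbf{R}^+\times\mathrm{SO}(2)$ (nonzero complex numbers $re^{i\theta}$ identified with $(r,R(\theta))$), with distance $d\big((r_1,R_1),(r_2,R_2)\big)=\sqrt{\log^2(r_1^{-1}r_2)+\|\operatorname{logm}(R_1^{-1}R_2)\|_F^2}$, and let $G=(\mathbf{R}\setminus\{0\})\times\mathrm{SO}(2)$ act on $\mathbf{C}$ by $(r_g,R_g).(r,R)=(r_g^2r,R_gR)$. For points $\mathbf{z}_1,\dots,\mathbf{z}_K\in\mathbf{C}$ and weights $w_1,\dots,w_K\in(0,1]$ with $\sum_i w_i=1$, define the weighted Fréchet mean $$\mathrm{wFM}(\{\mathbf{z}_i\},\{w_i\})=\operatorname{argmin}_{\mathbf{m}\in\mathbf{C}}\sum_{i=1}^K w_i\, d^2(\mathbf{z}_i,\mathbf{m}).$$ Then $\mathrm{wFM}$ is equivariant to the action of $G$: for every $g\in G$, $\mathrm{wFM}(\{g.\mathbf{z}_i\},\{w_i\})=g.\,\mathrm{wFM}(\{\mathbf{z}_i\},\{w_i\})$, i.e. $\mathbf{m}$ is a minimizer for $\{\mathbf{z}_i\}$ if and only if $g.\mathbf{m}$ is a minimizer for $\{g.\mathbf{z}_i\}$.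
   Context: $R(\theta)=\begin{bmatrix}\cos\theta & -\sin\theta\\ \sin\theta & \cos\theta\end{bmatrix}$, $\theta\in[-\pi,\pi]$; for $A=R(\theta)$, $\operatorname{logm}(A)=\theta\begin{bmatrix}0&1\\-1&0\end{bmatrix}$; $\|\cdot\|_F$ is the Frobenius norm. *)

theory Defs
  imports "HOL-Analysis.Analysis"
begin

type_synonym mat2 = "real^2^2"

definition rot :: "real \<Rightarrow> mat2" where
  "rot \<theta> = vector [vector [cos \<theta>, - sin \<theta>], vector [sin \<theta>, cos \<theta>]]"

definition SO2 :: "mat2 set" where
  "SO2 = {R. orthogonal_matrix R \<and> det R = 1}"

text \<open>Matrix logarithm on SO(2): for A = R(theta) with theta in [-pi,pi],
  logm A = theta * [[0,1],[-1,0]] (convention of the paper).\<close>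
definition logm_SO2 :: "mat2 \<Rightarrow> mat2" where
  "logm_SO2 A = (SOME \<theta>. \<theta> \<in> {-pi..pi} \<and> A = rot \<theta>) *\<^sub>R
                 vector [vector [0, 1], vector [-1, 0]]"

definition frob_norm :: "mat2 \<Rightarrow> real" where
  "frob_norm A = sqrt (\<Sum>i\<in>UNIV. \<Sum>j\<in>UNIV. (A $ i $ j)^2)"

definition Ccar :: "(real \<times> mat2) set" where
  "Ccar = {(r, R). r > 0 \<and> R \<in> SO2}"

definition Gcar :: "(real \<times> mat2) set" where
  "Gcar = {(r, R). r \<noteq> 0 \<and> R \<in> SO2}"

definition dist_C :: "real \<times> mat2 \<Rightarrow> real \<times> mat2 \<Rightarrow> real" where
  "dist_C p q = sqrt ((ln (fst q / fst p))^2
                      + (frob_norm (logm_SO2 (matrix_inv (snd p) ** snd q)))^2)"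

definition act :: "real \<times> mat2 \<Rightarrow> real \<times> mat2 \<Rightarrow> real \<times> mat2" where
  "act g p = ((fst g)^2 * fst p, snd g ** snd p)"

definition wFM_cost :: "nat \<Rightarrow> (nat \<Rightarrow> real \<times> mat2) \<Rightarrow> (nat \<Rightarrow> real) \<Rightarrow> real \<times> mat2 \<Rightarrow> real" where
  "wFM_cost K z w m = (\<Sum>i=1..K. w i * (dist_C (z i) m)^2)"

definition wFM :: "nat \<Rightarrow> (nat \<Rightarrow> real \<times> mat2) \<Rightarrow> (nat \<Rightarrow> real) \<Rightarrow> (real \<times> mat2) set" where
  "wFM K z w = {m \<in> Ccar. \<forall>m' \<in> Ccar. wFM_cost K z w m \<le> wFM_cost K z w m'}"

end

theory Submission
  imports Defs
begin

text \<open>The distance on C is invariant under G: the scale factor cancels in the ratio of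
  radii, and since the inverse of a rotation is its transpose, the relative rotation
  (G P)^-1 (G S) equals P^-1 S. As the action of each g is moreover a bijection of C,
  the cost of the transported data at g.m equals the cost of the original data at m, so the
  two argmin sets correspond under g.\<close>

lemma argmin_bij_betw_iff:
  fixes c c' :: "'a \<Rightarrow> 'b::order"
  assumes "bij_betw f S S" and "\<And>x. x \<in> S \<Longrightarrow> c' (f x) = c x" and "x \<in> S"
  shows "(\<forall>x'\<in>S. c x \<le> c x') \<longleftrightarrow> (\<forall>y'\<in>S. c' (f x) \<le> c' y')"
proof -
  have "(\<forall>y'\<in>S. c' (f x) \<le> c' y') \<longleftrightarrow> (\<forall>x'\<in>S. c' (f x) \<le> c' (f x'))"
    using bij_betw_imp_surj_on[OF assms(1)] by (metis image_iff)
  also have "\<dots> \<longleftrightarrow> (\<forall>x'\<in>S. c x \<le> c x')"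
    using assms(2,3) by simp
  finally show ?thesis by simp
qed

lemma argmin_bij_betw_image:
  fixes c c' :: "'a \<Rightarrow> 'b::order"
  assumes "bij_betw f S S" and "\<And>x. x \<in> S \<Longrightarrow> c' (f x) = c x"
  shows "{y \<in> S. \<forall>y'\<in>S. c' y \<le> c' y'} = f ` {x \<in> S. \<forall>x'\<in>S. c x \<le> c x'}"
proof -
  have "{y \<in> S. \<forall>y'\<in>S. c' y \<le> c' y'} = f ` {x \<in> S. \<forall>y'\<in>S. c' (f x) \<le> c' y'}"
    using bij_betw_imp_surj_on[OF assms(1)] by auto
  also have "\<dots> = f ` {x \<in> S. \<forall>x'\<in>S. c x \<le> c x'}"
    using argmin_bij_betw_iff[of f S c' c, OF assms] by auto
  finally show ?thesis .
qed

lemma matrix_inv_orthogonal: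
  fixes Q :: "real^'n^'n"
  assumes "orthogonal_matrix Q"
  shows "matrix_inv Q = transpose Q"
proof -
  have QT: "Q ** transpose Q = mat 1 \<and> transpose Q ** Q = mat 1"
    using assms by (simp add: orthogonal_matrix_def)
  have "Q ** matrix_inv Q = mat 1 \<and> matrix_inv Q ** Q = mat 1"
    unfolding matrix_inv_def by (rule someI, rule QT)
  then have "transpose Q ** (Q ** matrix_inv Q) = transpose Q"
    by simp
  then show ?thesis
    using QT by (simp add: matrix_mul_assoc)
qed

lemma act_in_Ccar:
  assumes "g \<in> Gcar" and "p \<in> Ccar"
  shows "act g p \<in> Ccar"
  using assms by (auto simp: Gcar_def Ccar_def SO2_def act_def orthogonal_matrix_mul det_mul)

lemma bij_betw_act_Ccar:
  assumes "g \<in> Gcar"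
  shows "bij_betw (act g) Ccar Ccar"
proof -
  obtain a G where g: "g = (a, G)" "a \<noteq> 0" "orthogonal_matrix G" "det G = 1"
    using assms by (auto simp: Gcar_def SO2_def)
  have GTG: "transpose G ** G = mat 1" and GGT: "G ** transpose G = mat 1"
    using g(3) by (simp_all add: orthogonal_matrix_def)
  have "inj_on (act g) Ccar"
  proof (rule inj_onI)
    fix p q assume "act g p = act g q"
    then have "a^2 * fst p = a^2 * fst q" and "G ** snd p = G ** snd q"
      using g(1) by (simp_all add: act_def)
    then have "fst p = fst q" and "transpose G ** (G ** snd p) = transpose G ** (G ** snd q)"
      using g(2) by simp_all
    then show "p = q"
      using GTG by (simp add: matrix_mul_assoc prod_eq_iff)
  qed
  moreover have "act g ` Ccar = Ccar"
  proof
    show "act g ` Ccar \<subseteq> Ccar"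
      using act_in_Ccar[OF assms] by blast
    show "Ccar \<subseteq> act g ` Ccar"
    proof
      fix p assume "p \<in> Ccar"
      then obtain r P where p: "p = (r, P)" "r > 0" "orthogonal_matrix P" "det P = 1"
        by (auto simp: Ccar_def SO2_def)
      let ?q = "(r / a^2, transpose G ** P)"
      have "?q \<in> Ccar"
        using g p by (auto simp: Ccar_def SO2_def orthogonal_matrix_mul det_mul det_transpose)
      moreover have "act g ?q = p"
        using g p GGT by (simp add: act_def matrix_mul_assoc)
      ultimately show "p \<in> act g ` Ccar"
        by (metis image_eqI)
    qed
  qed
  ultimately show ?thesis
    by (simp add: bij_betw_def)
qed

lemma dist_C_act:
  assumes "g \<in> Gcar" and "p \<in> Ccar"
  shows "dist_C (act g p) (act g q) = dist_C p q"
proof -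
  obtain a G where g: "g = (a, G)" "a \<noteq> 0" "orthogonal_matrix G"
    using assms(1) by (auto simp: Gcar_def SO2_def)
  obtain r P where p: "p = (r, P)" "orthogonal_matrix P"
    using assms(2) by (auto simp: Ccar_def SO2_def)
  obtain s S where q: "q = (s, S)"
    by force
  have "matrix_inv (G ** P) ** (G ** S) = transpose P ** (transpose G ** G) ** S"
    using g p by (simp add: matrix_inv_orthogonal orthogonal_matrix_mul matrix_transpose_mul
        matrix_mul_assoc)
  also have "\<dots> = matrix_inv P ** S"
    using g p by (simp add: matrix_inv_orthogonal orthogonal_matrix_def)
  finally have "matrix_inv (G ** P) ** (G ** S) = matrix_inv P ** S" .
  moreover have "a^2 * s / (a^2 * r) = s / r"
    using g by simp
  ultimately show ?thesis
    using g p q by (simp add: dist_C_def act_def)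
qed

lemma wFM_cost_act:
  assumes "g \<in> Gcar" and "\<forall>i\<in>{1..K}. z i \<in> Ccar"
  shows "wFM_cost K (\<lambda>i. act g (z i)) w (act g m) = wFM_cost K z w m"
  unfolding wFM_cost_def using assms dist_C_act by (intro sum.cong) auto

theorem proposition3:
  fixes K :: nat and z :: "nat \<Rightarrow> real \<times> mat2" and w :: "nat \<Rightarrow> real"
    and g :: "real \<times> mat2"
  assumes "\<forall>i\<in>{1..K}. z i \<in> Ccar"
    and "\<forall>i\<in>{1..K}. 0 < w i \<and> w i \<le> 1"
    and "(\<Sum>i=1..K. w i) = 1"
    and "g \<in> Gcar"
  shows "wFM K (\<lambda>i. act g (z i)) w = act g ` wFM K z w
         \<and> (\<forall>m\<in>Ccar. m \<in> wFM K z w \<longleftrightarrow> act g m \<in> wFM K (\<lambda>i. act g (z i)) w)"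
proof -
  have bij: "bij_betw (act g) Ccar Ccar"
    using bij_betw_act_Ccar[OF assms(4)] .
  have cost: "wFM_cost K (\<lambda>i. act g (z i)) w (act g m) = wFM_cost K z w m" for m
    using wFM_cost_act[OF assms(4,1)] .
  have "wFM K (\<lambda>i. act g (z i)) w = act g ` wFM K z w"
    unfolding wFM_def by (rule argmin_bij_betw_image[of _ _ _ "wFM_cost K z w", OF bij cost])
  moreover have "m \<in> wFM K z w \<longleftrightarrow> act g m \<in> wFM K (\<lambda>i. act g (z i)) w" if "m \<in> Ccar" for m
    using argmin_bij_betw_iff[of _ _ _ "wFM_cost K z w", OF bij cost that] that act_in_Ccar[OF assms(4) that]
    by (simp add: wFM_def)
  ultimately show ?thesis
    by blast
qed

end
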